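(* Let $s>2$ be a rational number that is not an integer, let $t>1$ be an integer with $p=st$ an integer, and write $q=\lceil s\rceil$. Let $\xi_1,\dots,\xi_q$ be positive integers with $\xi_{q-1}\binom{p-t}{(q-2)t+1}=\xi_q$, $\binom{p-t}{(r-1)t+1}\xi_r=\binom{p-t}{rt}\xi_{r+1}$ for $2\le r\le q-2$, and $(p-t)\xi_1=t\binom{p-t}{t}\xi_2$. Let $\mathcal{C}$ be the array code (over a finite field $\mathbb{F}$, with $t$ rows, entries in $\mathbb{F}^p$ with basis $x_1,\dots,x_p$) whose columns are: (Type $T_1$) for each $t$-subset $A\subseteq\{1,\dots,p\}$, $\xi_1$ columns with cells $x_a$, $a\in A$; (Type $T_r$, $2\le r\le q-1$) for each $(t-1)$-subset $B$ and each $((r-1)t+1)$-subset $C\subseteq\{1,\dots,p\}\setminus B$, $\xi_r$ columns with cells $x_b$ ($b\in B$) and one cell $\sum_{c\in C}x_c$; (Type $T_q$) for each $(t-1)$-subset $B$, $\xi_q$ columns with cells $x_b$ ($b\in B$) and one cell $\sum_{c\notin B}x_c$. Let $m$ be the number of columns. Then $\mathcal{C}$ is a $[t\times m,p]$ $k$-PIR array code with PIR rate $k/m=(\beta+\gamma)/(\beta+2\gamma)$, where \[ \beta=\xi_1(p-t+1)+\sum_{r=2}^{q-1}(t-1)\xi_r\binom{p-t+1}{(r-1)t+1}+(t-1)\xi_q,\qquad \gamma=(p-t+1)\Big(\sum_{r=1}^{q-2}\xi_{r+1}\binom{p-t}{rt}+\xi_q\Big). \]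
   Context: A $[t\times m,p]$ array code is a $t\times m$ array whose entries are linear combinations of a basis $x_1,\dots,x_p$ of $\mathbb{F}^p$. It has the $k$-PIR property (is a $k$-PIR array code) if for every $i$ there exist $k$ pairwise disjoint sets $S_1,\dots,S_k$ of columns such that for each $j$ the vector $x_i$ lies in the span of all entries of the columns in $S_j$. Its PIR rate is $k/m$. *)

theory Defs
  imports Complex_Main
begin

text \<open>Vectors of F^p are modelled as functions nat \<Rightarrow> 'a, coordinates 1..p
 (all other coordinates zero). The basis vector x_i is unitvec i.\<close>

type_synonym 'a vec = "nat \<Rightarrow> 'a"

definition unitvec :: "nat \<Rightarrow> ('a::zero_neq_one) vec" where
  "unitvec i = (\<lambda>j. if j = i then 1 else 0)"

definition lspan :: "('a::field) vec set \<Rightarrow> 'a vec set" where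
  "lspan S = {v. \<exists>U c. finite U \<and> U \<subseteq> S \<and> v = (\<lambda>j. \<Sum>u\<in>U. c u * u j)}"

definition is_array_code :: "nat \<Rightarrow> nat \<Rightarrow> 'i set \<Rightarrow> ('i \<Rightarrow> ('a::zero) vec list) \<Rightarrow> bool" where
  "is_array_code t p I col \<longleftrightarrow> finite I \<and>
     (\<forall>c\<in>I. length (col c) = t \<and> (\<forall>v\<in>set (col c). \<forall>j. j \<notin> {1..p} \<longrightarrow> v j = 0))"

definition is_k_PIR :: "nat \<Rightarrow> 'i set \<Rightarrow> ('i \<Rightarrow> ('a::field) vec list) \<Rightarrow> nat \<Rightarrow> bool" where
  "is_k_PIR p I col k \<longleftrightarrow>
     (\<forall>i\<in>{1..p}. \<exists>S :: nat \<Rightarrow> 'i set.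
        (\<forall>j<k. S j \<subseteq> I \<and> unitvec i \<in> lspan (\<Union>c\<in>S j. set (col c))) \<and>
        (\<forall>j<k. \<forall>j'<k. j \<noteq> j' \<longrightarrow> S j \<inter> S j' = {}))"

text \<open>Column indices of the construction: (r, B, C, j) means the j-th copy
 (j < xi r) of the column of type T_r determined by the sets B (and C).
 For type T_1 the set B plays the role of the t-subset A.\<close>

definition code_index :: "nat \<Rightarrow> nat \<Rightarrow> nat \<Rightarrow> (nat \<Rightarrow> nat) \<Rightarrow> (nat \<times> nat set \<times> nat set \<times> nat) set" where
  "code_index p t q xi =
     {(1, A, {}, j) | A j. A \<subseteq> {1..p} \<and> card A = t \<and> j < xi 1}
   \<union> {(r, B, C, j) | r B C j. 2 \<le> r \<and> r \<le> q - 1 \<and> B \<subseteq> {1..p} \<and> card B = t - 1 \<and>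
        C \<subseteq> {1..p} - B \<and> card C = (r - 1) * t + 1 \<and> j < xi r}
   \<union> {(q, B, {}, j) | B j. B \<subseteq> {1..p} \<and> card B = t - 1 \<and> j < xi q}"

definition code_col :: "nat \<Rightarrow> nat \<Rightarrow> (nat \<times> nat set \<times> nat set \<times> nat) \<Rightarrow> ('a::{zero_neq_one,comm_monoid_add}) vec list" where
  "code_col p q c = (case c of (r, B, C, j) \<Rightarrow>
     (if r = 1 then map unitvec (sorted_list_of_set B)
      else if r = q then map unitvec (sorted_list_of_set B) @ [\<lambda>i. \<Sum>b\<in>{1..p} - B. unitvec b i]
      else map unitvec (sorted_list_of_set B) @ [\<lambda>i. \<Sum>b\<in>C. unitvec b i]))"

end

theory Submission
  imports Defs "HOL-Library.Disjoint_Sets" "HOL-Library.Indicator_Function"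
begin

text \<open>Fix a coordinate \<open>i\<close>. Besides the direct columns, which contain \<open>x\<^sub>i\<close> as a cell, every
  column is lower (type \<open>r < q\<close> and \<open>i \<notin> B \<union> C\<close>) or upper (\<open>i \<notin> B\<close>, and of type \<open>q\<close> or
  with \<open>i \<in> C\<close>). A lower column of type \<open>r < q - 1\<close> spans \<open>x\<^sub>i\<close> together with a column of type
  \<open>r + 1\<close> whose sum cell runs over \<open>insert i (B \<union> C)\<close>; one of type \<open>q - 1\<close> does so together with
  a column of type \<open>q\<close> whose set \<open>B'\<close> contains the complement of \<open>insert i (B \<union> C)\<close>, and for
  fixed \<open>C\<close> Hall's theorem lets \<open>B \<mapsto> B'\<close> be chosen as a permutation of the \<open>(t - 1)\<close>-sets.
  The balancing equations for the \<open>\<xi>\<^sub>r\<close> say exactly that every such partner key is shared by as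
  many lower as upper columns, so the lower columns can be matched bijectively with the upper
  ones. With \<open>d\<close> direct and \<open>u\<close> upper columns this gives \<open>k = d + u\<close> disjoint recovery sets
  among \<open>m = d + 2 u\<close> columns, and counting the columns type by type shows \<open>d : u = \<beta> : \<gamma>\<close>.\<close>

section \<open>Hall's theorem\<close>

definition Hall_condition :: "'i set \<Rightarrow> ('i \<Rightarrow> 'a set) \<Rightarrow> bool" where
  "Hall_condition I A \<longleftrightarrow> (\<forall>J\<subseteq>I. card J \<le> card (\<Union>(A ` J)))"

lemma Hall_condition_subset: "Hall_condition I A \<Longrightarrow> J \<subseteq> I \<Longrightarrow> Hall_condition J A"
  unfolding Hall_condition_def by auto

lemma Hall_condition_remove_critical:
  assumes H: "Hall_condition I A" and fin: "finite I" "\<forall>i\<in>I. finite (A i)"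
    and J: "J \<subseteq> I" "card (\<Union>(A ` J)) = card J"
  shows "Hall_condition (I - J) (\<lambda>i. A i - \<Union>(A ` J))"
  unfolding Hall_condition_def
proof (intro allI impI)
  fix K assume K: "K \<subseteq> I - J"
  let ?X = "\<Union>(A ` J)" and ?Y = "\<Union>((\<lambda>i. A i - \<Union>(A ` J)) ` K)"
  have finJK: "finite J" "finite K" using J K fin finite_subset by blast+
  have finXY: "finite ?X" "finite ?Y"
    using finJK J K fin by (auto intro!: finite_UN_I)
  have "card K + card J = card (K \<union> J)"
    using K finJK by (subst card_Un_disjoint) auto
  also have "\<dots> \<le> card (\<Union>(A ` (K \<union> J)))"
    using H J K unfolding Hall_condition_def by (metis Diff_subset Un_subset_iff order_trans)
  also have "\<Union>(A ` (K \<union> J)) = ?Y \<union> ?X" by auto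
  also have "card (?Y \<union> ?X) = card ?Y + card J"
    using finXY J(2) by (subst card_Un_disjoint) auto
  finally show "card K \<le> card ?Y" by simp
qed

lemma Hall_condition_remove_point:
  assumes fin: "finite I" "\<forall>i\<in>I. finite (A i)"
    and strict: "\<And>J. J \<noteq> {} \<Longrightarrow> J \<subset> I \<Longrightarrow> card J < card (\<Union>(A ` J))"
    and i: "i \<in> I"
  shows "Hall_condition (I - {i}) (\<lambda>j. A j - {x})"
  unfolding Hall_condition_def
proof (intro allI impI)
  fix K assume K: "K \<subseteq> I - {i}"
  show "card K \<le> card (\<Union>((\<lambda>j. A j - {x}) ` K))"
  proof (cases "K = {}")
    case False
    have "finite (\<Union>(A ` K))"
      using K fin finite_subset[OF K] by (intro finite_UN_I) auto
    moreover have "\<Union>((\<lambda>j. A j - {x}) ` K) = \<Union>(A ` K) - {x}" by auto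
    moreover have "card K < card (\<Union>(A ` K))" using strict[OF False] K i by auto
    ultimately show ?thesis by (simp add: card_Diff_singleton_if) linarith
  qed simp
qed

lemma combine_matchings:
  assumes "J \<subseteq> I" "inj_on f J" "\<forall>i\<in>J. f i \<in> A i"
    and "inj_on g (I - J)" "\<forall>i\<in>I - J. g i \<in> A i - f ` J"
  shows "\<exists>h. inj_on h I \<and> (\<forall>i\<in>I. h i \<in> A i)"
proof -
  have "g i \<notin> f ` J" if "i \<in> I - J" for i using assms(5) that by blast
  then have "f ` J \<inter> g ` (I - J) = {}" by (force simp: disjoint_iff)
  then have "inj_on (\<lambda>i. if i \<in> J then f i else g i) (J \<union> (I - J))"
    by (rule inj_on_disjoint_Un[OF assms(2,4)])
  moreover have "J \<union> (I - J) = I" using assms(1) by auto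
  ultimately show ?thesis using assms(3,5) by (intro exI[of _ "\<lambda>i. if i \<in> J then f i else g i"]) auto
qed

theorem Hall_marriage:
  assumes "finite I" "\<forall>i\<in>I. finite (A i)" "Hall_condition I A"
  shows "\<exists>f. inj_on f I \<and> (\<forall>i\<in>I. f i \<in> A i)"
  using assms
proof (induction "card I" arbitrary: I A rule: less_induct)
  case less
  note fin = less.prems(1,2) and H = less.prems(3)
  have le: "card J \<le> card (\<Union>(A ` J))" if "J \<subseteq> I" for J
    using H that unfolding Hall_condition_def by blast
  consider "I = {}"
    | J where "J \<noteq> {}" "J \<subset> I" "card (\<Union>(A ` J)) = card J"
    | "\<And>J. J \<noteq> {} \<Longrightarrow> J \<subset> I \<Longrightarrow> card J < card (\<Union>(A ` J))" "I \<noteq> {}"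
    using le by (metis le_neq_implies_less psubset_imp_subset)
  then show ?case
  proof cases
    case 1
    then show ?thesis by simp
  next
    case (2 J)
    have finJ: "finite J" using 2 fin finite_subset by blast
    have ltJ: "card J < card I" using 2 fin psubset_card_mono by blast
    have "0 < card J" using 2 finJ by (simp add: card_gt_0_iff)
    then have ltIJ: "card (I - J) < card I"
      using ltJ 2 finJ by (simp add: card_Diff_subset psubset_imp_subset)
    have J_hyps: "\<forall>i\<in>J. finite (A i)" "Hall_condition J A"
      using fin 2 Hall_condition_subset[OF H] by auto
    obtain f where f: "inj_on f J" "\<forall>i\<in>J. f i \<in> A i"
      using less.hyps[OF ltJ finJ J_hyps] by blast
    have rest_hyps: "finite (I - J)" "\<forall>i\<in>I - J. finite (A i - \<Union>(A ` J))"
      "Hall_condition (I - J) (\<lambda>i. A i - \<Union>(A ` J))"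
      using fin Hall_condition_remove_critical[OF H fin] 2 by auto
    obtain g where g: "inj_on g (I - J)" "\<forall>i\<in>I - J. g i \<in> A i - \<Union>(A ` J)"
      using less.hyps[OF ltIJ rest_hyps] by blast
    moreover have "f ` J \<subseteq> \<Union>(A ` J)" using f(2) by blast
    ultimately have "\<forall>i\<in>I - J. g i \<in> A i - f ` J" by blast
    then show ?thesis by (rule combine_matchings[OF psubset_imp_subset[OF 2(2)] f g(1)])
  next
    case 3
    then obtain i where i: "i \<in> I" by blast
    obtain x where x: "x \<in> A i" using le[of "{i}"] i by fastforce
    have lt: "card (I - {i}) < card I" by (rule card_Diff1_less[OF fin(1) i])
    have rest_hyps: "finite (I - {i})" "\<forall>j\<in>I - {i}. finite (A j - {x})"
      "Hall_condition (I - {i}) (\<lambda>j. A j - {x})"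
      using fin Hall_condition_remove_point[OF fin 3(1) i] by auto
    obtain g where g: "inj_on g (I - {i})" "\<forall>j\<in>I - {i}. g j \<in> A j - {x}"
      using less.hyps[OF lt rest_hyps] by blast
    have "{i} \<subseteq> I" "inj_on (\<lambda>_. x) {i}" "\<forall>j\<in>{i}. x \<in> A j" using i x by auto
    from combine_matchings[OF this g(1)] g(2) show ?thesis by simp
  qed
qed

lemma regular_symmetric_perm:
  assumes fin: "finite I" and sub: "\<And>R. R \<in> I \<Longrightarrow> A R \<subseteq> I"
    and reg: "\<And>R. R \<in> I \<Longrightarrow> card (A R) = D" and "D > 0"
    and sym: "\<And>R R'. R \<in> I \<Longrightarrow> R' \<in> I \<Longrightarrow> R' \<in> A R \<longleftrightarrow> R \<in> A R'"
  shows "\<exists>f. bij_betw f I I \<and> (\<forall>R\<in>I. f R \<in> A R)"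
proof -
  have finA: "finite (A R)" if "R \<in> I" for R
    using sub[OF that] fin finite_subset by blast
  have card_Sigma: "card (SIGMA R:K. A R) = card K * D" if "K \<subseteq> I" for K
  proof -
    have "card (SIGMA R:K. A R) = (\<Sum>R\<in>K. card (A R))"
      using that fin finA by (intro card_SigmaI) (auto intro: finite_subset)
    also have "\<dots> = card K * D" using that reg by (simp add: subset_iff)
    finally show ?thesis .
  qed
  have "Hall_condition I A"
    unfolding Hall_condition_def
  proof (intro allI impI)
    fix J assume J: "J \<subseteq> I"
    let ?N = "\<Union>(A ` J)"
    have N: "?N \<subseteq> I" using J sub by blast
    have "card J * D = card (SIGMA R:J. A R)" using card_Sigma[OF J] ..
    also have "\<dots> \<le> card (SIGMA R:?N. A R)"
    proof (rule card_inj_on_le)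
      show "inj_on prod.swap (SIGMA R:J. A R)" by (simp add: inj_on_def)
      show "prod.swap ` (SIGMA R:J. A R) \<subseteq> (SIGMA R:?N. A R)"
        using J sub sym by fastforce
      show "finite (SIGMA R:?N. A R)"
        using N fin finA by (auto intro: finite_subset)
    qed
    also have "\<dots> = card ?N * D" using card_Sigma[OF N] .
    finally show "card J \<le> card ?N" using \<open>D > 0\<close> by simp
  qed
  then obtain f where f: "inj_on f I" "\<forall>R\<in>I. f R \<in> A R"
    using Hall_marriage[OF fin] finA by blast
  have "f ` I = I"
    using f sub fin by (intro card_subset_eq) (auto simp: card_image)
  then show ?thesis using f by (auto simp: bij_betw_def)
qed

section \<open>Subsets of fixed size\<close>

definition ksubsets :: "'a set \<Rightarrow> nat \<Rightarrow> 'a set set" where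
  "ksubsets W k = {B. B \<subseteq> W \<and> card B = k}"

lemma finite_ksubsets: "finite W \<Longrightarrow> finite (ksubsets W k)"
  unfolding ksubsets_def by auto

lemma card_ksubsets: "finite W \<Longrightarrow> card (ksubsets W k) = card W choose k"
  unfolding ksubsets_def by (rule n_subsets)

lemma card_ksubsets_containing:
  assumes "finite W" "x \<in> W" "k > 0"
  shows "card {B \<in> ksubsets W k. x \<in> B} = (card W - 1) choose (k - 1)"
proof -
  have "{B \<in> ksubsets W k. x \<in> B} = insert x ` ksubsets (W - {x}) (k - 1)"
  proof (intro equalityI subsetI)
    fix B assume "B \<in> {B \<in> ksubsets W k. x \<in> B}"
    then have B: "B \<subseteq> W" "card B = k" "x \<in> B" unfolding ksubsets_def by auto
    then have "finite B" using assms(1) finite_subset by blast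
    then have "B - {x} \<in> ksubsets (W - {x}) (k - 1)"
      using B unfolding ksubsets_def by auto
    then show "B \<in> insert x ` ksubsets (W - {x}) (k - 1)"
      using B(3) by (metis image_eqI insert_Diff)
  next
    fix B assume "B \<in> insert x ` ksubsets (W - {x}) (k - 1)"
    then obtain B0 where B0: "B = insert x B0" "B0 \<subseteq> W - {x}" "card B0 = k - 1"
      unfolding ksubsets_def by blast
    have "finite B0" "x \<notin> B0" using B0(2) assms(1) finite_subset by auto
    then have "card B = k" using B0 assms(3) by simp
    then show "B \<in> {B \<in> ksubsets W k. x \<in> B}"
      using B0 assms(2) unfolding ksubsets_def by auto
  qed
  moreover have "inj_on (insert x) (ksubsets (W - {x}) (k - 1))"
    unfolding ksubsets_def inj_on_def by blast
  ultimately show ?thesis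
    using assms by (simp add: card_image card_ksubsets)
qed

lemma bij_betw_covering_ksubsets:
  assumes "finite W" "k \<le> card W" "card W \<le> 2 * k" "B \<in> ksubsets W k"
  shows "bij_betw (\<lambda>B'. B' \<inter> B) {B' \<in> ksubsets W k. W - B \<subseteq> B'} (ksubsets B (2 * k - card W))"
proof -
  let ?d = "2 * k - card W"
  have finB: "finite B" using assms(1,4) unfolding ksubsets_def by (auto intro: finite_subset)
  have card_WB: "card (W - B) = card W - k"
    using assms(4) finB unfolding ksubsets_def by (simp add: card_Diff_subset)
  show ?thesis
  proof (rule bij_betw_byWitness[where f' = "\<lambda>X. (W - B) \<union> X"])
    show "\<forall>B'\<in>{B' \<in> ksubsets W k. W - B \<subseteq> B'}. (W - B) \<union> (B' \<inter> B) = B'"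
      unfolding ksubsets_def by auto
    show "\<forall>X\<in>ksubsets B ?d. ((W - B) \<union> X) \<inter> B = X"
      unfolding ksubsets_def by auto
    show "(\<lambda>B'. B' \<inter> B) ` {B' \<in> ksubsets W k. W - B \<subseteq> B'} \<subseteq> ksubsets B ?d"
    proof
      fix X assume "X \<in> (\<lambda>B'. B' \<inter> B) ` {B' \<in> ksubsets W k. W - B \<subseteq> B'}"
      then obtain B' where B': "B' \<subseteq> W" "card B' = k" "W - B \<subseteq> B'" "X = B' \<inter> B"
        unfolding ksubsets_def by blast
      have "B' = (W - B) \<union> X" "(W - B) \<inter> X = {}" "finite B'"
        using B' assms(1) by (auto intro: finite_subset)
      then have "card B' = card (W - B) + card X"
        by (metis card_Un_disjoint finite_Un)
      then have "card X = ?d" using B'(2) card_WB assms(2,3) by linarith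
      then show "X \<in> ksubsets B ?d" using B'(4) unfolding ksubsets_def by auto
    qed
    show "(\<lambda>X. (W - B) \<union> X) ` ksubsets B ?d \<subseteq> {B' \<in> ksubsets W k. W - B \<subseteq> B'}"
    proof
      fix Y assume "Y \<in> (\<lambda>X. (W - B) \<union> X) ` ksubsets B ?d"
      then obtain X where X: "X \<subseteq> B" "card X = ?d" "Y = (W - B) \<union> X"
        unfolding ksubsets_def by blast
      have "finite X" "(W - B) \<inter> X = {}" using X finB finite_subset by auto
      then have "card Y = card (W - B) + card X"
        using X(3) assms(1) by (simp add: card_Un_disjoint)
      then have "card Y = k" using X(2) card_WB assms(2,3) by linarith
      then show "Y \<in> {B' \<in> ksubsets W k. W - B \<subseteq> B'}"
        using X assms(4) unfolding ksubsets_def by auto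
    qed
  qed
qed

lemma ksubsets_covering_perm:
  assumes "finite W" "k \<le> card W" "card W \<le> 2 * k"
  shows "\<exists>\<tau>. bij_betw \<tau> (ksubsets W k) (ksubsets W k) \<and> (\<forall>B\<in>ksubsets W k. W - B \<subseteq> \<tau> B)"
proof -
  let ?A = "\<lambda>B. {B' \<in> ksubsets W k. W - B \<subseteq> B'}" and ?d = "2 * k - card W"
  have "card (?A B) = k choose ?d" if B: "B \<in> ksubsets W k" for B
  proof -
    have "finite B" "card B = k" using B assms(1) unfolding ksubsets_def by (auto intro: finite_subset)
    then show ?thesis
      using bij_betw_same_card[OF bij_betw_covering_ksubsets[OF assms B]] by (simp add: card_ksubsets)
  qed
  moreover have "k choose ?d > 0" using assms(2) by simp
  ultimately have "\<exists>\<tau>. bij_betw \<tau> (ksubsets W k) (ksubsets W k) \<and> (\<forall>B\<in>ksubsets W k. \<tau> B \<in> ?A B)"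
    using assms(1) by (intro regular_symmetric_perm) (auto simp: ksubsets_def finite_ksubsets)
  then show ?thesis by blast
qed

definition covering_perm :: "'a set \<Rightarrow> nat \<Rightarrow> 'a set \<Rightarrow> 'a set" where
  "covering_perm W k = (SOME \<tau>. bij_betw \<tau> (ksubsets W k) (ksubsets W k) \<and>
     (\<forall>B\<in>ksubsets W k. W - B \<subseteq> \<tau> B))"

lemma
  assumes "finite W" "k \<le> card W" "card W \<le> 2 * k"
  shows bij_betw_covering_perm: "bij_betw (covering_perm W k) (ksubsets W k) (ksubsets W k)"
    and covering_perm_covers: "B \<in> ksubsets W k \<Longrightarrow> W - B \<subseteq> covering_perm W k B"
  using someI_ex[OF ksubsets_covering_perm[OF assms]] unfolding covering_perm_def by blast+

lemma card_fibre_bij_betw: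
  assumes "bij_betw h D E" "y \<in> E"
  shows "card {x \<in> D. h x = y} = 1"
proof -
  obtain x where x: "x \<in> D" "h x = y" using assms by (auto simp: bij_betw_def)
  then have "{x \<in> D. h x = y} = {x}"
    using bij_betw_imp_inj_on[OF assms(1)] by (auto dest: inj_onD)
  then show ?thesis by simp
qed

lemma ex_bij_betw_same_fibres:
  assumes "finite X" "finite Y" "\<And>\<kappa>. card {x \<in> X. f x = \<kappa>} = card {y \<in> Y. g y = \<kappa>}"
  shows "\<exists>h. bij_betw h X Y \<and> (\<forall>x\<in>X. g (h x) = f x)"
proof -
  have "\<exists>h. bij_betw h {x \<in> X. f x = \<kappa>} {y \<in> Y. g y = \<kappa>}" for \<kappa>
    using assms by (intro finite_same_card_bij) auto
  then obtain h where h: "\<And>\<kappa>. bij_betw (h \<kappa>) {x \<in> X. f x = \<kappa>} {y \<in> Y. g y = \<kappa>}"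
    by metis
  have "bij_betw (\<lambda>x. h (f x) x) {x \<in> X. f x = \<kappa>} {y \<in> Y. g y = \<kappa>}" for \<kappa>
    by (subst bij_betw_cong[where g = "h \<kappa>"]) (auto simp: h)
  then have "bij_betw (\<lambda>x. h (f x) x) (\<Union>\<kappa>. {x \<in> X. f x = \<kappa>}) (\<Union>\<kappa>. {y \<in> Y. g y = \<kappa>})"
    by (intro bij_betw_UNION_disjoint) (auto simp: disjoint_family_on_def)
  moreover have "(\<Union>\<kappa>. {x \<in> X. f x = \<kappa>}) = X" "(\<Union>\<kappa>. {y \<in> Y. g y = \<kappa>}) = Y" by auto
  moreover have "g (h (f x) x) = f x" if "x \<in> X" for x
    using bij_betwE[OF h[of "f x"]] that by auto
  ultimately show ?thesis by auto
qed

lemma card_SigmaI_const: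
  assumes "finite A" "\<And>a. a \<in> A \<Longrightarrow> finite (B a) \<and> card (B a) = n"
  shows "card (SIGMA a:A. B a) = card A * n"
  using assms by (simp add: card_SigmaI)

lemma sum_atLeastAtMost_split_ends:
  assumes "3 \<le> (q::nat)"
  shows "(\<Sum>r=1..q. f r) = f 1 + (\<Sum>r=2..q-1. f r) + (f q :: 'a::comm_monoid_add)"
proof -
  have "{1..q} = insert 1 (insert q {2..q-1})" using assms by auto
  then show ?thesis using assms by (simp add: ac_simps)
qed

section \<open>Spans of indicator vectors\<close>

lemma lspan_base: "v \<in> S \<Longrightarrow> v \<in> lspan S"
  unfolding lspan_def by (intro CollectI exI[of _ "{v}"] exI[of _ "\<lambda>_. 1"]) auto

lemma lspan_zero: "(\<lambda>j. 0) \<in> lspan S"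
  unfolding lspan_def by (intro CollectI exI[of _ "{}"]) auto

lemma lspan_add:
  assumes "v \<in> lspan S" "w \<in> lspan S"
  shows "(\<lambda>j. v j + w j) \<in> lspan S"
proof -
  obtain U c where U: "finite U" "U \<subseteq> S" "v = (\<lambda>j. \<Sum>u\<in>U. c u * u j)"
    using assms(1) unfolding lspan_def by blast
  obtain V d where V: "finite V" "V \<subseteq> S" "w = (\<lambda>j. \<Sum>u\<in>V. d u * u j)"
    using assms(2) unfolding lspan_def by blast
  define e where "e u = (if u \<in> U then c u else 0) + (if u \<in> V then d u else 0)" for u
  have sum_eq: "v j + w j = (\<Sum>u\<in>U \<union> V. e u * u j)" for j
  proof -
    have "(\<Sum>u\<in>U \<union> V. e u * u j) = (\<Sum>u\<in>U \<union> V. if u \<in> U then c u * u j else 0)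
        + (\<Sum>u\<in>U \<union> V. if u \<in> V then d u * u j else 0)"
      unfolding sum.distrib[symmetric] by (rule sum.cong) (auto simp: e_def distrib_right)
    also have "\<dots> = v j + w j"
      using U V by (simp add: sum.If_cases Int_absorb2)
    finally show ?thesis ..
  qed
  show ?thesis unfolding lspan_def
    using U V sum_eq by (intro CollectI exI[of _ "U \<union> V"] exI[of _ e]) auto
qed

lemma lspan_smult:
  assumes "v \<in> lspan S"
  shows "(\<lambda>j. a * v j) \<in> lspan S"
proof -
  obtain U c where U: "finite U" "U \<subseteq> S" "v = (\<lambda>j. \<Sum>u\<in>U. c u * u j)"
    using assms unfolding lspan_def by blast
  then have "(\<lambda>j. a * v j) = (\<lambda>j. \<Sum>u\<in>U. (a * c u) * u j)"
    by (simp add: sum_distrib_left mult.assoc)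
  then show ?thesis unfolding lspan_def
    using U by (intro CollectI exI[of _ U] exI[of _ "\<lambda>u. a * c u"]) auto
qed

lemma lspan_diff:
  assumes "v \<in> lspan S" "w \<in> lspan S"
  shows "(\<lambda>j. v j - w j) \<in> lspan S"
  using lspan_add[OF assms(1) lspan_smult[OF assms(2), of "- 1"]] by simp

lemma unitvec_eq_indicator: "unitvec i = indicator {i}"
  unfolding unitvec_def by (auto simp: indicator_def)

lemma sum_indicator_singletons: "finite D \<Longrightarrow> (\<lambda>j. \<Sum>b\<in>D. indicator {b} j) = indicator D"
  by (simp add: fun_eq_iff indicator_def of_bool_def sum.delta sum.delta')

lemma lspan_indicator_Un:
  fixes S :: "'a::field vec set"
  assumes "D \<inter> E = {}" "indicator D \<in> lspan S" "indicator E \<in> lspan S"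
  shows "indicator (D \<union> E) \<in> lspan S"
proof -
  have "indicator (D \<union> E) = (\<lambda>j. indicator D j + indicator E j :: 'a::field)"
    using assms(1) by (auto simp: fun_eq_iff indicator_def)
  then show ?thesis using lspan_add[OF assms(2,3)] by simp
qed

lemma lspan_indicator_Diff:
  fixes S :: "'a::field vec set"
  assumes "E \<subseteq> D" "indicator D \<in> lspan S" "indicator E \<in> lspan S"
  shows "indicator (D - E) \<in> lspan S"
proof -
  have "indicator (D - E) = (\<lambda>j. indicator D j - indicator E j :: 'a::field)"
    using assms(1) by (auto simp: fun_eq_iff indicator_def)
  then show ?thesis using lspan_diff[OF assms(2,3)] by simp
qed

lemma lspan_indicator:
  assumes "finite D" "\<And>b. b \<in> D \<Longrightarrow> unitvec b \<in> lspan S"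
  shows "(indicator D :: 'a::field vec) \<in> lspan S"
  using assms
proof (induction D rule: finite_induct)
  case empty
  then show ?case using lspan_zero by (simp add: indicator_def[abs_def])
next
  case (insert b D)
  then have "indicator ({b} \<union> D) \<in> lspan S"
    by (intro lspan_indicator_Un) (auto simp: unitvec_eq_indicator)
  then show ?case by simp
qed

lemma unitvec_in_lspan_step:
  fixes S :: "'a::field vec set"
  assumes "finite B" "i \<notin> B \<union> C" "B \<inter> C = {}"
    and "\<And>b. b \<in> B \<Longrightarrow> unitvec b \<in> lspan S"
    and "indicator C \<in> lspan S" "indicator (insert i (B \<union> C)) \<in> lspan S"
  shows "unitvec i \<in> lspan S"
proof -
  have "indicator (insert i (B \<union> C) - C) \<in> lspan S"
    by (rule lspan_indicator_Diff[OF _ assms(6,5)]) auto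
  from lspan_indicator_Diff[OF _ this lspan_indicator[OF assms(1,4)]]
  have "indicator (insert i (B \<union> C) - C - B) \<in> lspan S"
    using assms(3) by auto
  moreover have "insert i (B \<union> C) - C - B = {i}" using assms(2) by auto
  ultimately show ?thesis by (simp add: unitvec_eq_indicator)
qed

lemma unitvec_in_lspan_complement:
  fixes S :: "'a::field vec set"
  assumes "finite B" "finite B'" "C \<subseteq> P" "B \<subseteq> P - C" "B' \<subseteq> P" "P - {i} - C - B \<subseteq> B'"
    and "i \<in> P - C - B"
    and units: "\<And>b. b \<in> B \<union> B' \<Longrightarrow> unitvec b \<in> lspan S"
    and "indicator C \<in> lspan S" "indicator (P - B') \<in> lspan S"
  shows "unitvec i \<in> lspan S"
proof -
  let ?R = "P - {i} - C - B"
  have ind_B: "indicator B \<in> lspan S" and ind_B': "indicator B' \<in> lspan S"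
    and ind_R: "indicator ?R \<in> lspan S"
    using assms(1,2,6) finite_subset[OF assms(6,2)] units by (auto intro!: lspan_indicator)
  have "indicator ((P - B') \<union> B') \<in> lspan S"
    by (rule lspan_indicator_Un[OF _ assms(10) ind_B']) auto
  then have "indicator P \<in> lspan S" using assms(5) by (simp add: Un_absorb2)
  then have "indicator (P - C) \<in> lspan S"
    by (rule lspan_indicator_Diff[OF assms(3) _ assms(9)])
  then have "indicator (P - C - B) \<in> lspan S"
    by (rule lspan_indicator_Diff[OF assms(4) _ ind_B])
  from lspan_indicator_Diff[OF _ this ind_R]
  have "indicator (P - C - B - ?R) \<in> lspan S" by auto
  moreover have "P - C - B - ?R = {i}" using assms(7) by auto
  ultimately show ?thesis by (simp add: unitvec_eq_indicator)
qed

lemma is_k_PIR_I: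
  assumes "\<And>i. i \<in> {1..p} \<Longrightarrow> \<exists>\<S>. finite \<S> \<and> card \<S> = k \<and> disjoint \<S> \<and>
    (\<forall>S\<in>\<S>. S \<subseteq> I \<and> unitvec i \<in> lspan (\<Union>c\<in>S. set (col c)))"
  shows "is_k_PIR p I col k"
  unfolding is_k_PIR_def
proof
  fix i assume "i \<in> {1..p}"
  then obtain \<S> where \<S>: "finite \<S>" "card \<S> = k" "disjoint \<S>"
    "\<forall>S\<in>\<S>. S \<subseteq> I \<and> unitvec i \<in> lspan (\<Union>c\<in>S. set (col c))"
    using assms by blast
  then obtain g where g: "bij_betw g {0..<k} \<S>" using ex_bij_betw_nat_finite by blast
  show "\<exists>S. (\<forall>j<k. S j \<subseteq> I \<and> unitvec i \<in> lspan (\<Union>c\<in>S j. set (col c))) \<and>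
      (\<forall>j<k. \<forall>j'<k. j \<noteq> j' \<longrightarrow> S j \<inter> S j' = {})"
  proof (intro exI conjI allI impI)
    fix j assume "j < k"
    then have "g j \<in> \<S>" using bij_betwE[OF g] by simp
    then show "g j \<subseteq> I" "unitvec i \<in> lspan (\<Union>c\<in>g j. set (col c))" using \<S>(4) by auto
  next
    fix j j' assume "j < k" "j' < k" "j \<noteq> j'"
    then have "g j \<in> \<S>" "g j' \<in> \<S>" "g j \<noteq> g j'"
      using bij_betwE[OF g] bij_betw_imp_inj_on[OF g] by (auto dest: inj_onD)
    then show "g j \<inter> g j' = {}" using \<S>(3) by (auto simp: disjoint_def)
  qed
qed

section \<open>The construction\<close>

type_synonym col_index = "nat \<times> nat set \<times> nat set \<times> nat"

locale pir_construction =
  fixes p t q :: nat and xi :: "nat \<Rightarrow> nat"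
  assumes t_ge_2: "2 \<le> t" and q_ge_3: "3 \<le> q"
    and p_gt: "(q - 1) * t < p" and p_lt: "p < q * t"
begin

abbreviation cols :: "col_index set" where
  "cols \<equiv> code_index p t q xi"

definition shape :: "nat \<Rightarrow> nat set \<Rightarrow> nat set \<Rightarrow> bool" where
  "shape r B C \<longleftrightarrow>
     (r = 1 \<and> B \<subseteq> {1..p} \<and> card B = t \<and> C = {}) \<or>
     (2 \<le> r \<and> r \<le> q - 1 \<and> B \<subseteq> {1..p} \<and> card B = t - 1 \<and> C \<subseteq> {1..p} - B \<and>
        card C = (r - 1) * t + 1) \<or>
     (r = q \<and> B \<subseteq> {1..p} \<and> card B = t - 1 \<and> C = {})"

lemma mem_cols: "(r, B, C, j) \<in> cols \<longleftrightarrow> shape r B C \<and> j < xi r"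
  unfolding code_index_def shape_def by auto

lemma shape_D:
  assumes "shape r B C"
  shows "1 \<le> r" "r \<le> q" "B \<subseteq> {1..p}" "C \<subseteq> {1..p} - B" "finite B" "finite C"
  using assms q_ge_3 unfolding shape_def by (auto intro: finite_subset)

lemma shape_1: "shape 1 B C \<longleftrightarrow> B \<subseteq> {1..p} \<and> card B = t \<and> C = {}"
  using q_ge_3 by (auto simp: shape_def)

lemma shape_top: "shape q B C \<longleftrightarrow> B \<subseteq> {1..p} \<and> card B = t - 1 \<and> C = {}"
  using q_ge_3 by (auto simp: shape_def)

lemma shape_mid:
  "2 \<le> r \<Longrightarrow> r \<le> q - 1 \<Longrightarrow> shape r B C \<longleftrightarrow>
    B \<subseteq> {1..p} \<and> card B = t - 1 \<and> C \<subseteq> {1..p} - B \<and> card C = (r - 1) * t + 1"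
  by (auto simp: shape_def)

lemma type_sizes: "(q - 1) * t = (q - 2) * t + t" "q * t = (q - 2) * t + 2 * t"
proof -
  have "q - 1 = (q - 2) + 1" "q = (q - 2) + 2" using q_ge_3 by simp_all
  then show "(q - 1) * t = (q - 2) * t + t" "q * t = (q - 2) * t + 2 * t"
    by (metis add_mult_distrib mult_1)+
qed

lemma t_lt_p: "t < p"
  using p_gt q_ge_3 type_sizes t_ge_2 by linarith

lemma card_complement:
  "B \<subseteq> {1..p} \<Longrightarrow> card B = t - 1 \<Longrightarrow> card ({1..p} - B) = p - t + 1"
  using t_lt_p t_ge_2 by (simp add: card_Diff_subset finite_subset)

lemma finite_cols: "finite cols"
proof (rule finite_subset)
  show "cols \<subseteq> {..q} \<times> Pow {1..p} \<times> Pow {1..p} \<times> {..<(\<Sum>r\<le>q. xi r)}"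
  proof
    fix x assume "x \<in> cols"
    then obtain r B C j where x: "x = (r, B, C, j)" "shape r B C" "j < xi r"
      by (cases x) (auto simp: mem_cols)
    moreover have "xi r \<le> (\<Sum>r\<le>q. xi r)" if "r \<le> q"
      using that by (intro member_le_sum) auto
    ultimately show "x \<in> {..q} \<times> Pow {1..p} \<times> Pow {1..p} \<times> {..<(\<Sum>r\<le>q. xi r)}"
      using shape_D[of r B C] by fastforce
  qed
qed simp

lemma set_code_col:
  assumes "(r, B, C, j) \<in> cols"
  shows "set (code_col p q (r, B, C, j) :: 'a::{zero_neq_one,comm_monoid_add} vec list) =
    (\<lambda>b. indicator {b}) ` B \<union> (if r = 1 then {} else {indicator (if r = q then {1..p} - B else C)})"
proof -
  have "shape r B C" using assms by (simp add: mem_cols)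
  then show ?thesis
    using shape_D[of r B C] q_ge_3
    by (auto simp: code_col_def sum_indicator_singletons unitvec_eq_indicator)
qed

theorem code_is_array_code:
  "is_array_code t p cols (code_col p q :: _ \<Rightarrow> 'a::{zero_neq_one,comm_monoid_add} vec list)"
  unfolding is_array_code_def
proof (intro conjI ballI finite_cols)
  fix x assume "x \<in> cols"
  then obtain r B C j where x: "x = (r, B, C, j)" "shape r B C" by (cases x) (auto simp: mem_cols)
  then show "length (code_col p q x :: 'a vec list) = t"
    using shape_D[OF x(2)] t_ge_2 q_ge_3 unfolding shape_def code_col_def by auto
  fix v assume "v \<in> set (code_col p q x :: 'a vec list)"
  then have "v \<in> (\<lambda>b. indicator {b}) ` B \<union> {indicator ({1..p} - B), indicator C}"
    using set_code_col[of r B C j] x \<open>x \<in> cols\<close> by (auto split: if_splits)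
  then show "\<forall>k. k \<notin> {1..p} \<longrightarrow> v k = 0"
    using shape_D[OF x(2)] by (auto simp: indicator_def)
qed

definition top_partner :: "nat \<Rightarrow> nat set \<Rightarrow> nat set \<Rightarrow> nat set" where
  "top_partner i B C = covering_perm ({1..p} - {i} - C) (t - 1) B"

lemma
  assumes "i \<in> {1..p}" "C \<subseteq> {1..p} - {i}" "card C = (q - 2) * t + 1"
  shows bij_betw_top_partner: "bij_betw (\<lambda>B. top_partner i B C)
      (ksubsets ({1..p} - {i} - C) (t - 1)) (ksubsets ({1..p} - {i} - C) (t - 1))"
    and top_partner_covers: "B \<in> ksubsets ({1..p} - {i} - C) (t - 1) \<Longrightarrow>
      {1..p} - {i} - C - B \<subseteq> top_partner i B C"
proof -
  let ?W = "{1..p} - {i} - C"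
  have "card ?W = p - 1 - card C"
    using assms by (simp add: card_Diff_subset finite_subset)
  then have "t - 1 \<le> card ?W" "card ?W \<le> 2 * (t - 1)"
    using assms(3) p_gt p_lt type_sizes t_ge_2 by linarith+
  then show "bij_betw (\<lambda>B. top_partner i B C) (ksubsets ?W (t - 1)) (ksubsets ?W (t - 1))"
    and "B \<in> ksubsets ?W (t - 1) \<Longrightarrow> ?W - B \<subseteq> top_partner i B C"
    unfolding top_partner_def
    by (simp_all add: bij_betw_covering_perm covering_perm_covers)
qed

definition direct_cols :: "nat \<Rightarrow> col_index set" where
  "direct_cols i = {(r, B, C, j) \<in> cols. i \<in> B}"

definition lower_cols :: "nat \<Rightarrow> col_index set" where
  "lower_cols i = {(r, B, C, j) \<in> cols. i \<notin> B \<and> i \<notin> C \<and> r \<noteq> q}"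

definition upper_cols :: "nat \<Rightarrow> col_index set" where
  "upper_cols i = {(r, B, C, j) \<in> cols. i \<notin> B \<and> (r = q \<or> i \<in> C)}"

text \<open>A lower and an upper column with equal keys span \<open>x\<^sub>i\<close> together.\<close>

definition lower_key :: "nat \<Rightarrow> col_index \<Rightarrow> nat \<times> nat set" where
  "lower_key i = (\<lambda>(r, B, C, j).
     if r = q - 1 then (q, top_partner i B C) else (r + 1, insert i (B \<union> C)))"

definition upper_key :: "col_index \<Rightarrow> nat \<times> nat set" where
  "upper_key = (\<lambda>(r, B, C, j). if r = q then (q, B) else (r, C))"

lemma cols_partition:
  "cols = direct_cols i \<union> lower_cols i \<union> upper_cols i"
  "direct_cols i \<inter> lower_cols i = {}" "direct_cols i \<inter> upper_cols i = {}"
  "lower_cols i \<inter> upper_cols i = {}"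
  unfolding direct_cols_def lower_cols_def upper_cols_def by auto

lemma finite_cols_partition:
  "finite (direct_cols i)" "finite (lower_cols i)" "finite (upper_cols i)"
  using finite_cols by (simp_all add: cols_partition(1)[of i])

lemma
  fixes S :: "'a::field vec set"
  assumes "(r, B, C, j) \<in> cols" "set (code_col p q (r, B, C, j)) \<subseteq> S"
  shows unitvec_in_lspan_cells: "b \<in> B \<Longrightarrow> unitvec b \<in> lspan S"
    and sum_cell_in_lspan_cells: "r \<noteq> q \<Longrightarrow> indicator C \<in> lspan S"
    and complement_cell_in_lspan_cells: "r = q \<Longrightarrow> indicator ({1..p} - B) \<in> lspan S"
proof -
  have cells: "(\<lambda>b. indicator {b}) ` B \<union>
      (if r = 1 then {} else {indicator (if r = q then {1..p} - B else C)}) \<subseteq> S"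
    using assms(2) unfolding set_code_col[OF assms(1)] .
  then show "b \<in> B \<Longrightarrow> unitvec b \<in> lspan S"
    by (auto simp: unitvec_eq_indicator intro: lspan_base)
  show "r = q \<Longrightarrow> indicator ({1..p} - B) \<in> lspan S"
    using cells q_ge_3 by (auto intro: lspan_base)
  assume "r \<noteq> q"
  show "indicator C \<in> lspan S"
  proof (cases "r = 1")
    case True
    then have "C = {}" using assms(1) unfolding True mem_cols shape_1 by simp
    then show ?thesis using lspan_zero by (simp add: indicator_def[abs_def])
  qed (use cells \<open>r \<noteq> q\<close> in \<open>auto intro: lspan_base\<close>)
qed

lemma unitvec_in_lspan_key_pair:
  assumes i: "i \<in> {1..p}" and x: "x \<in> lower_cols i" and y: "y \<in> upper_cols i"
    and key: "upper_key y = lower_key i x"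
  shows "(unitvec i :: 'a::field vec) \<in> lspan (set (code_col p q x) \<union> set (code_col p q y))"
proof -
  obtain r B C j r' B' C' j' where xy: "x = (r, B, C, j)" "y = (r', B', C', j')"
    by (cases x, cases y) auto
  let ?S = "set (code_col p q x) \<union> set (code_col p q y) :: 'a vec set"
  have x_cols: "(r, B, C, j) \<in> cols" "i \<notin> B" "i \<notin> C" "r \<noteq> q"
    and y_cols: "(r', B', C', j') \<in> cols" "i \<notin> B'"
    using x y xy by (auto simp: lower_cols_def upper_cols_def)
  have sx: "shape r B C" and sy: "shape r' B' C'"
    using x_cols(1) y_cols(1) by (simp_all add: mem_cols)
  note Dx = shape_D[OF sx] and Dy = shape_D[OF sy]
  have cells: "set (code_col p q (r, B, C, j)) \<subseteq> ?S" "set (code_col p q (r', B', C', j')) \<subseteq> ?S"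
    using xy by auto
  have units: "unitvec b \<in> lspan ?S" if "b \<in> B \<union> B'" for b
    using that unitvec_in_lspan_cells[OF x_cols(1) cells(1)] unitvec_in_lspan_cells[OF y_cols(1) cells(2)]
    by blast
  note ind_C = sum_cell_in_lspan_cells[OF x_cols(1) cells(1) x_cols(4)]
  show ?thesis
  proof (cases "r = q - 1")
    case True
    then have y_top: "r' = q" "B' = top_partner i B C"
      using key xy q_ge_3 by (auto simp: lower_key_def upper_key_def split: if_splits)
    have C: "C \<subseteq> {1..p} - {i}" "card C = (q - 2) * t + 1"
      using sx x_cols(3) True q_ge_3 unfolding shape_def by (auto simp: algebra_simps)
    have B: "B \<in> ksubsets ({1..p} - {i} - C) (t - 1)"
      using sx x_cols(2) True q_ge_3 unfolding shape_def ksubsets_def by auto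
    note ind_top = complement_cell_in_lspan_cells[OF y_cols(1) cells(2) y_top(1)]
    show ?thesis
      by (rule unitvec_in_lspan_complement[OF Dx(5) Dy(5) _ _ Dy(3) _ _ units ind_C ind_top])
        (use Dx i x_cols top_partner_covers[OF i C B] y_top in auto)
  next
    case False
    then have y_step: "r' = r + 1" "C' = insert i (B \<union> C)" "r + 1 \<noteq> q"
      using key xy Dx(2) x_cols(4) by (auto simp: lower_key_def upper_key_def split: if_splits)
    have "indicator C' \<in> lspan ?S"
      using sum_cell_in_lspan_cells[OF y_cols(1) cells(2)] y_step by simp
    then show ?thesis
      by (intro unitvec_in_lspan_step[OF Dx(5) _ _ units ind_C]) (use Dx x_cols y_step in auto)
  qed
qed

lemma card_cols_of_type:
  "card {(r', B, C, j) \<in> cols. r' = r \<and> P B C} = card {(B, C). shape r B C \<and> P B C} * xi r"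
proof -
  let ?g = "\<lambda>((B, C), j). (r, B, C, j)" and ?BC = "{(B, C). shape r B C \<and> P B C}"
  have "{(r', B, C, j) \<in> cols. r' = r \<and> P B C} = ?g ` (?BC \<times> {..<xi r})"
    by (auto simp: mem_cols image_iff)
  moreover have "inj_on ?g (?BC \<times> {..<xi r})" by (auto simp: inj_on_def)
  moreover have "?BC \<subseteq> Pow {1..p} \<times> Pow {1..p}" using shape_D(3,4) by fastforce
  then have "finite ?BC" by (rule finite_subset) simp
  ultimately show ?thesis by (simp add: card_image card_cartesian_product)
qed

lemma card_upper_fibre_top:
  "card {y \<in> upper_cols i. upper_key y = (q, K)} =
    (if K \<in> ksubsets ({1..p} - {i}) (t - 1) then xi q else 0)"
proof -
  have "{y \<in> upper_cols i. upper_key y = (q, K)} =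
      {(r, B, C, j) \<in> cols. r = q \<and> i \<notin> B \<and> B = K}"
    by (auto simp: upper_cols_def upper_key_def split: if_splits)
  moreover have "{(B, C). shape q B C \<and> i \<notin> B \<and> B = K} =
      (if K \<in> ksubsets ({1..p} - {i}) (t - 1) then {(K, {})} else {})"
    using q_ge_3 by (auto simp: shape_def ksubsets_def)
  ultimately show ?thesis by (simp add: card_cols_of_type)
qed

lemma card_upper_fibre:
  assumes "l \<noteq> q"
  shows "card {y \<in> upper_cols i. upper_key y = (l, K)} =
    (if 2 \<le> l \<and> l \<le> q - 1 \<and> K \<subseteq> {1..p} \<and> i \<in> K \<and> card K = (l - 1) * t + 1
     then ((p - card K) choose (t - 1)) * xi l else 0)"
proof -
  let ?V = "2 \<le> l \<and> l \<le> q - 1 \<and> K \<subseteq> {1..p} \<and> i \<in> K \<and> card K = (l - 1) * t + 1"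
  have "{y \<in> upper_cols i. upper_key y = (l, K)} =
      {(r, B, C, j) \<in> cols. r = l \<and> i \<notin> B \<and> i \<in> C \<and> C = K}"
    using assms by (auto simp: upper_cols_def upper_key_def split: if_splits)
  moreover have "{(B, C). shape l B C \<and> i \<notin> B \<and> i \<in> C \<and> C = K} =
      (if ?V then (\<lambda>B. (B, K)) ` ksubsets ({1..p} - K) (t - 1) else {})"
    using assms q_ge_3 by (auto simp: shape_def ksubsets_def)
  moreover have "card ((\<lambda>B. (B, K)) ` ksubsets ({1..p} - K) (t - 1)) = (p - card K) choose (t - 1)"
    if "K \<subseteq> {1..p}"
    using that by (simp add: card_image inj_on_def card_ksubsets card_Diff_subset finite_subset)
  ultimately show ?thesis by (simp add: card_cols_of_type)
qed

lemma lower_key_fst: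
  assumes "x \<in> lower_cols i"
  shows "2 \<le> fst (lower_key i x)" "fst (lower_key i x) \<le> q"
  using assms q_ge_3 by (auto simp: lower_cols_def lower_key_def mem_cols dest: shape_D(1,2))

lemma card_lower_fibre_2:
  assumes "i \<in> {1..p}"
  shows "card {x \<in> lower_cols i. lower_key i x = (2, K)} =
    (if K \<subseteq> {1..p} \<and> i \<in> K \<and> card K = t + 1 then xi 1 else 0)"
proof -
  have "{x \<in> lower_cols i. lower_key i x = (2, K)} =
      {(r, B, C, j) \<in> cols. r = 1 \<and> i \<notin> B \<and> i \<notin> C \<and> insert i (B \<union> C) = K}"
    using q_ge_3 by (auto simp: lower_cols_def lower_key_def split: if_splits)
  moreover have "{(B, C). shape 1 B C \<and> i \<notin> B \<and> i \<notin> C \<and> insert i (B \<union> C) = K} =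
      (if K \<subseteq> {1..p} \<and> i \<in> K \<and> card K = t + 1 then {(K - {i}, {})} else {})"
    using assms q_ge_3 by (auto simp: shape_def card_insert_if finite_subset)
  ultimately show ?thesis by (simp add: card_cols_of_type)
qed

lemma lower_mid_pairs:
  assumes "i \<in> {1..p}" "3 \<le> l" "l \<le> q - 1"
  shows "{(B, C). shape (l - 1) B C \<and> i \<notin> B \<and> i \<notin> C \<and> insert i (B \<union> C) = K} =
    (if K \<subseteq> {1..p} \<and> i \<in> K \<and> card K = (l - 1) * t + 1
     then (\<lambda>B. (B, K - {i} - B)) ` ksubsets (K - {i}) (t - 1) else {})"
    (is "?PS = (if ?V then ?img else {})")
proof -
  have "l - 1 = Suc (l - 2)" using assms(2) by simp
  then have l_sizes: "(l - 1) * t = (l - 2) * t + t" by simp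
  show ?thesis
  proof (intro equalityI subsetI)
    fix BC assume "BC \<in> ?PS"
    then obtain B C where BC: "BC = (B, C)" "shape (l - 1) B C" "i \<notin> B" "i \<notin> C"
      "K = insert i (B \<union> C)" by auto
    then have B: "B \<subseteq> {1..p}" "card B = t - 1" "C \<subseteq> {1..p} - B" "card C = (l - 2) * t + 1"
      using assms(2,3) by (auto simp: shape_def)
    have "finite B" "finite C" "B \<inter> C = {}" using B shape_D(5,6)[OF BC(2)] by auto
    then have "card (B \<union> C) = card B + card C" by (rule card_Un_disjoint)
    then have "card K = Suc (card B + card C)"
      using BC(3-5) \<open>finite B\<close> \<open>finite C\<close> by simp
    then have "card K = (l - 1) * t + 1" using B l_sizes t_ge_2 by simp
    then have ?V using BC(5) B(1,3) assms(1) by auto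
    moreover have "B \<in> ksubsets (K - {i}) (t - 1)" "C = K - {i} - B"
      using BC B unfolding ksubsets_def by auto
    ultimately show "BC \<in> (if ?V then ?img else {})" using BC(1) by simp
  next
    fix BC assume "BC \<in> (if ?V then ?img else {})"
    then obtain B where V: ?V and BC: "BC = (B, K - {i} - B)" "B \<subseteq> K - {i}" "card B = t - 1"
      by (auto split: if_splits simp: ksubsets_def)
    have "finite K" using V finite_subset by auto
    then have "card (K - {i} - B) = (l - 2) * t + 1"
      using V BC l_sizes t_ge_2 by (simp add: card_Diff_subset finite_subset)
    then have "shape (l - 1) B (K - {i} - B)"
      unfolding shape_def using V BC assms(2,3) by (intro disjI2 disjI1) auto
    then show "BC \<in> ?PS" using V BC by auto
  qed
qed

lemma card_lower_fibre_mid: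
  assumes "i \<in> {1..p}" "3 \<le> l" "l \<le> q - 1"
  shows "card {x \<in> lower_cols i. lower_key i x = (l, K)} =
    (if K \<subseteq> {1..p} \<and> i \<in> K \<and> card K = (l - 1) * t + 1
     then (((l - 1) * t) choose (t - 1)) * xi (l - 1) else 0)"
proof -
  have "{x \<in> lower_cols i. lower_key i x = (l, K)} =
      {(r, B, C, j) \<in> cols. r = l - 1 \<and> i \<notin> B \<and> i \<notin> C \<and> insert i (B \<union> C) = K}"
    using assms(2,3) by (auto simp: lower_cols_def lower_key_def split: if_splits)
  moreover note lower_mid_pairs[OF assms]
  moreover have "card ((\<lambda>B. (B, K - {i} - B)) ` ksubsets (K - {i}) (t - 1)) =
      ((l - 1) * t) choose (t - 1)" if "K \<subseteq> {1..p}" "i \<in> K" "card K = (l - 1) * t + 1"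
    using that finite_subset[of K "{1..p}"]
    by (simp add: card_image inj_on_def card_ksubsets)
  ultimately show ?thesis by (simp add: card_cols_of_type)
qed

lemma shape_top_lower_iff:
  "shape (q - 1) B C \<and> i \<notin> B \<and> i \<notin> C \<longleftrightarrow>
    C \<in> ksubsets ({1..p} - {i}) ((q - 2) * t + 1) \<and> B \<in> ksubsets ({1..p} - {i} - C) (t - 1)"
  using q_ge_3 by (auto simp: shape_def ksubsets_def diff_diff_left)

lemma top_partner_mem:
  assumes "i \<in> {1..p}" "C \<in> ksubsets ({1..p} - {i}) ((q - 2) * t + 1)"
    "B \<in> ksubsets ({1..p} - {i} - C) (t - 1)"
  shows "top_partner i B C \<in> ksubsets ({1..p} - {i} - C) (t - 1)"
proof -
  have "C \<subseteq> {1..p} - {i}" "card C = (q - 2) * t + 1" using assms(2) unfolding ksubsets_def by auto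
  from bij_betwE[OF bij_betw_top_partner[OF assms(1) this]] show ?thesis using assms(3) by blast
qed

lemma card_top_lower_pairs:
  assumes i: "i \<in> {1..p}" and K: "K \<in> ksubsets ({1..p} - {i}) (t - 1)"
  shows "card {(B, C). C \<in> ksubsets ({1..p} - {i}) ((q - 2) * t + 1) \<and>
      B \<in> ksubsets ({1..p} - {i} - C) (t - 1) \<and> top_partner i B C = K} = (p - t) choose ((q - 2) * t + 1)"
    (is "card ?PS = _")
proof -
  let ?c = "(q - 2) * t + 1" and ?U = "{1..p} - {i}"
  let ?fibre = "\<lambda>C. {B \<in> ksubsets (?U - C) (t - 1). top_partner i B C = K}"
  have "?PS = prod.swap ` (SIGMA C : ksubsets (?U - K) ?c. ?fibre C)"
  proof (intro equalityI subsetI)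
    fix BC assume "BC \<in> ?PS"
    then obtain B C where BC: "BC = (B, C)" "C \<in> ksubsets ?U ?c" "B \<in> ksubsets (?U - C) (t - 1)"
      "top_partner i B C = K"
      by blast
    then have "C \<in> ksubsets (?U - K) ?c"
      using top_partner_mem[OF i BC(2,3)] unfolding ksubsets_def by auto
    then show "BC \<in> prod.swap ` (SIGMA C : ksubsets (?U - K) ?c. ?fibre C)"
      using BC by (simp add: image_iff)
  next
    fix BC assume "BC \<in> prod.swap ` (SIGMA C : ksubsets (?U - K) ?c. ?fibre C)"
    then show "BC \<in> ?PS" unfolding ksubsets_def by auto
  qed
  moreover have "card (?fibre C) = 1" if "C \<in> ksubsets (?U - K) ?c" for C
  proof (rule card_fibre_bij_betw[OF bij_betw_top_partner[OF i]])
    show "C \<subseteq> ?U" "card C = ?c" using that unfolding ksubsets_def by auto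
    show "K \<in> ksubsets (?U - C) (t - 1)" using that K unfolding ksubsets_def by auto
  qed
  moreover have "card (?U - K) = p - t"
  proof -
    have "K \<subseteq> ?U" "card K = t - 1" using K unfolding ksubsets_def by auto
    then have "card (?U - K) = card ?U - (t - 1)"
      by (simp add: card_Diff_subset finite_subset)
    then show ?thesis using i t_ge_2 by simp
  qed
  ultimately show ?thesis
    by (simp add: card_image card_SigmaI finite_ksubsets card_ksubsets)
qed

lemma card_lower_fibre_top:
  assumes i: "i \<in> {1..p}"
  shows "card {x \<in> lower_cols i. lower_key i x = (q, K)} =
    (if K \<in> ksubsets ({1..p} - {i}) (t - 1) then ((p - t) choose ((q - 2) * t + 1)) * xi (q - 1) else 0)"
proof -
  let ?c = "(q - 2) * t + 1" and ?U = "{1..p} - {i}"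
  let ?PS = "{(B, C). C \<in> ksubsets ?U ?c \<and> B \<in> ksubsets (?U - C) (t - 1) \<and> top_partner i B C = K}"
  have "{x \<in> lower_cols i. lower_key i x = (q, K)} =
      {(r, B, C, j) \<in> cols. r = q - 1 \<and> (i \<notin> B \<and> i \<notin> C) \<and> top_partner i B C = K}"
    using q_ge_3 by (auto simp: lower_cols_def lower_key_def split: if_splits)
  moreover have "{(B, C). shape (q - 1) B C \<and> (i \<notin> B \<and> i \<notin> C) \<and> top_partner i B C = K} = ?PS"
    using shape_top_lower_iff by blast
  ultimately have lower_card: "card {x \<in> lower_cols i. lower_key i x = (q, K)} = card ?PS * xi (q - 1)"
    using card_cols_of_type[of "q - 1" "\<lambda>B C. (i \<notin> B \<and> i \<notin> C) \<and> top_partner i B C = K"]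
    by simp
  show ?thesis
  proof (cases "K \<in> ksubsets ?U (t - 1)")
    case False
    have "K \<notin> ksubsets (?U - C) (t - 1)" for C
      using False unfolding ksubsets_def by auto
    then have no_pairs: "?PS = {}" using top_partner_mem[OF i] by auto
    show ?thesis unfolding lower_card no_pairs using False by simp
  next
    case True
    show ?thesis unfolding lower_card card_top_lower_pairs[OF i True] using True by simp
  qed
qed

lemma card_by_type:
  assumes "A \<subseteq> cols"
  shows "card A = (\<Sum>r=1..q. card {(r', B, C, j) \<in> A. r' = r})"
proof -
  have "A = (\<Union>r\<in>{1..q}. {(r', B, C, j) \<in> A. r' = r})"
    using assms shape_D(1,2) by (fastforce simp: mem_cols)
  moreover have "finite A" using assms finite_cols finite_subset by blast
  then have "card (\<Union>r\<in>{1..q}. {(r', B, C, j) \<in> A. r' = r}) =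
      (\<Sum>r=1..q. card {(r', B, C, j) \<in> A. r' = r})"
    by (intro card_UN_disjoint) (auto intro: finite_subset[of _ A])
  ultimately show ?thesis by simp
qed

lemma card_direct_cols_of_type_ends:
  assumes i: "i \<in> {1..p}"
  shows "card {(r', B, C, j) \<in> direct_cols i. r' = 1} = ((p - 1) choose (t - 1)) * xi 1"
    and "card {(r', B, C, j) \<in> direct_cols i. r' = q} = ((p - 1) choose (t - 2)) * xi q"
proof -
  have type: "{(r', B, C, j) \<in> direct_cols i. r' = r} = {(r', B, C, j) \<in> cols. r' = r \<and> i \<in> B}" for r
    by (auto simp: direct_cols_def)
  have single: "card ((\<lambda>B. (B, {} :: nat set)) ` {B \<in> ksubsets {1..p} k. i \<in> B}) = (p - 1) choose (k - 1)"
    if "k > 0" for k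
    using card_ksubsets_containing[OF _ i that] by (simp add: card_image inj_on_def)
  have "{(B, C). shape 1 B C \<and> i \<in> B} = (\<lambda>B. (B, {})) ` {B \<in> ksubsets {1..p} t. i \<in> B}"
    unfolding shape_1 ksubsets_def by (auto simp: image_iff)
  then show "card {(r', B, C, j) \<in> direct_cols i. r' = 1} = ((p - 1) choose (t - 1)) * xi 1"
    using single[of t] t_ge_2 by (simp add: type card_cols_of_type)
  have "{(B, C). shape q B C \<and> i \<in> B} = (\<lambda>B. (B, {})) ` {B \<in> ksubsets {1..p} (t - 1). i \<in> B}"
    unfolding shape_top ksubsets_def by (auto simp: image_iff)
  moreover have "t - 1 - 1 = t - 2" by simp
  ultimately show "card {(r', B, C, j) \<in> direct_cols i. r' = q} = ((p - 1) choose (t - 2)) * xi q"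
    using single[of "t - 1"] t_ge_2 by (simp add: type card_cols_of_type)
qed

lemma card_direct_cols_of_mid_type:
  assumes i: "i \<in> {1..p}" and r: "2 \<le> r" "r \<le> q - 1"
  shows "card {(r', B, C, j) \<in> direct_cols i. r' = r} =
    ((p - 1) choose (t - 2)) * ((p - t + 1) choose ((r - 1) * t + 1)) * xi r"
proof -
  let ?rows = "{B \<in> ksubsets {1..p} (t - 1). i \<in> B}"
  have "{(r', B, C, j) \<in> direct_cols i. r' = r} = {(r', B, C, j) \<in> cols. r' = r \<and> i \<in> B}"
    by (auto simp: direct_cols_def)
  moreover have "{(B, C). shape r B C \<and> i \<in> B} =
      (SIGMA B : ?rows. ksubsets ({1..p} - B) ((r - 1) * t + 1))"
    unfolding shape_mid[OF r] ksubsets_def by auto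
  moreover have "card (SIGMA B : ?rows. ksubsets ({1..p} - B) ((r - 1) * t + 1)) =
      card ?rows * ((p - t + 1) choose ((r - 1) * t + 1))"
  proof (rule card_SigmaI_const)
    fix B assume "B \<in> ?rows"
    then have "card ({1..p} - B) = p - t + 1" using card_complement by (auto simp: ksubsets_def)
    then show "finite (ksubsets ({1..p} - B) ((r - 1) * t + 1)) \<and>
        card (ksubsets ({1..p} - B) ((r - 1) * t + 1)) = (p - t + 1) choose ((r - 1) * t + 1)"
      by (simp add: finite_ksubsets card_ksubsets)
  qed (simp add: finite_ksubsets)
  moreover have "card ?rows = (p - 1) choose (t - 2)"
    using card_ksubsets_containing[OF _ i, of "t - 1"] t_ge_2 by (simp add: numeral_2_eq_2)
  ultimately show ?thesis by (simp add: card_cols_of_type)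
qed

lemma card_upper_cols_of_type_ends:
  assumes i: "i \<in> {1..p}"
  shows "card {(r', B, C, j) \<in> upper_cols i. r' = 1} = 0"
    and "card {(r', B, C, j) \<in> upper_cols i. r' = q} = ((p - 1) choose (t - 1)) * xi q"
proof -
  have type_1: "{(r', B, C, j) \<in> upper_cols i. r' = 1} = {(r', B, C, j) \<in> cols. r' = 1 \<and> i \<in> C}"
    using q_ge_3 by (auto simp: upper_cols_def mem_cols shape_def)
  have no_pairs: "{(B, C). shape 1 B C \<and> i \<in> C} = {}" unfolding shape_1 by auto
  show "card {(r', B, C, j) \<in> upper_cols i. r' = 1} = 0"
    unfolding type_1 card_cols_of_type[of 1 "\<lambda>B C. i \<in> C"] no_pairs by simp
  have "{(r', B, C, j) \<in> upper_cols i. r' = q} = {(r', B, C, j) \<in> cols. r' = q \<and> i \<notin> B}"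
    by (auto simp: upper_cols_def)
  moreover have "{(B, C). shape q B C \<and> i \<notin> B} = (\<lambda>B. (B, {})) ` ksubsets ({1..p} - {i}) (t - 1)"
    unfolding shape_top ksubsets_def by (auto simp: image_iff)
  ultimately show "card {(r', B, C, j) \<in> upper_cols i. r' = q} = ((p - 1) choose (t - 1)) * xi q"
    using i by (simp add: card_cols_of_type card_image inj_on_def card_ksubsets)
qed

lemma card_upper_cols_of_mid_type:
  assumes i: "i \<in> {1..p}" and r: "2 \<le> r" "r \<le> q - 1"
  shows "card {(r', B, C, j) \<in> upper_cols i. r' = r} =
    ((p - 1) choose (t - 1)) * ((p - t) choose ((r - 1) * t)) * xi r"
proof -
  let ?rows = "ksubsets ({1..p} - {i}) (t - 1)"
  let ?fibre = "\<lambda>B. {C \<in> ksubsets ({1..p} - B) ((r - 1) * t + 1). i \<in> C}"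
  have "{(r', B, C, j) \<in> upper_cols i. r' = r} = {(r', B, C, j) \<in> cols. r' = r \<and> i \<notin> B \<and> i \<in> C}"
    using r by (auto simp: upper_cols_def)
  moreover have "{(B, C). shape r B C \<and> i \<notin> B \<and> i \<in> C} = (SIGMA B : ?rows. ?fibre B)"
    unfolding shape_mid[OF r] ksubsets_def by auto
  moreover have "card (SIGMA B : ?rows. ?fibre B) = card ?rows * ((p - t) choose ((r - 1) * t))"
  proof (rule card_SigmaI_const)
    fix B assume "B \<in> ?rows"
    then have "card ({1..p} - B) = p - t + 1" "i \<in> {1..p} - B"
      using card_complement i by (auto simp: ksubsets_def)
    then show "finite (?fibre B) \<and> card (?fibre B) = (p - t) choose ((r - 1) * t)"
      using card_ksubsets_containing[of "{1..p} - B" i "(r - 1) * t + 1"]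
      by (simp add: finite_ksubsets)
  qed (simp add: finite_ksubsets)
  moreover have "card ?rows = (p - 1) choose (t - 1)" using i by (simp add: card_ksubsets)
  ultimately show ?thesis by (simp add: card_cols_of_type)
qed

definition beta :: nat where
  "beta = xi 1 * (p - t + 1) + (\<Sum>r=2..q-1. (t - 1) * xi r * ((p - t + 1) choose ((r - 1) * t + 1)))
     + (t - 1) * xi q"

definition gamma :: nat where
  "gamma = (p - t + 1) * ((\<Sum>r=1..q-2. xi (r + 1) * ((p - t) choose (r * t))) + xi q)"

lemma binomial_ratio: "(t - 1) * ((p - 1) choose (t - 1)) = (p - t + 1) * ((p - 1) choose (t - 2))"
proof -
  have "t - 1 = Suc (t - 2)" "p - 1 - (t - 2) = p - t + 1" using t_ge_2 t_lt_p by simp_all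
  then show ?thesis
    using binomial_absorption[of "t - 2" "p - 1"] binomial_absorb_comp[of "p - 1" "t - 2"]
    by (simp add: ac_simps)
qed

lemma card_direct_cols:
  assumes "i \<in> {1..p}"
  shows "(t - 1) * card (direct_cols i) = ((p - 1) choose (t - 2)) * beta"
proof -
  define K where "K = (p - 1) choose (t - 2)"
  define c where "c r = (p - t + 1) choose ((r - 1) * t + 1)" for r
  let ?n = "\<lambda>r. card {(r', B, C, j) \<in> direct_cols i. r' = r}"
  have "card (direct_cols i) = (\<Sum>r=1..q. ?n r)"
    by (rule card_by_type) (auto simp: direct_cols_def)
  also have "\<dots> = ?n 1 + (\<Sum>r=2..q-1. ?n r) + ?n q"
    by (rule sum_atLeastAtMost_split_ends[OF q_ge_3])
  also have "(\<Sum>r=2..q-1. ?n r) = (\<Sum>r=2..q-1. K * c r * xi r)"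
    unfolding K_def c_def by (intro sum.cong refl card_direct_cols_of_mid_type[OF assms]) auto
  finally have "card (direct_cols i) = ((p - 1) choose (t - 1)) * xi 1 + (\<Sum>r=2..q-1. K * c r * xi r) + K * xi q"
    unfolding card_direct_cols_of_type_ends[OF assms] K_def .
  moreover have "beta = xi 1 * (p - t + 1) + (\<Sum>r=2..q-1. (t - 1) * xi r * c r) + (t - 1) * xi q"
    unfolding beta_def c_def ..
  ultimately show ?thesis
    using binomial_ratio unfolding K_def[symmetric]
    by (simp add: algebra_simps sum_distrib_left)
qed

lemma card_upper_cols:
  assumes "i \<in> {1..p}"
  shows "(p - t + 1) * card (upper_cols i) = ((p - 1) choose (t - 1)) * gamma"
proof -
  define K where "K = (p - 1) choose (t - 1)"
  define c where "c r = (p - t) choose (r * t)" for r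
  let ?n = "\<lambda>r. card {(r', B, C, j) \<in> upper_cols i. r' = r}"
  have "card (upper_cols i) = (\<Sum>r=1..q. ?n r)"
    by (rule card_by_type) (auto simp: upper_cols_def)
  also have "\<dots> = ?n 1 + (\<Sum>r=2..q-1. ?n r) + ?n q"
    by (rule sum_atLeastAtMost_split_ends[OF q_ge_3])
  also have "(\<Sum>r=2..q-1. ?n r) = (\<Sum>r=2..q-1. K * c (r - 1) * xi r)"
    unfolding K_def c_def by (intro sum.cong refl card_upper_cols_of_mid_type[OF assms]) auto
  also have "\<dots> = (\<Sum>r=1..q-2. K * c r * xi (r + 1))"
  proof -
    have shift: "{2..q-1} = {1 + 1..(q - 2) + 1}" using q_ge_3 by auto
    show ?thesis unfolding shift sum.shift_bounds_cl_nat_ivl by simp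
  qed
  finally have "card (upper_cols i) = (\<Sum>r=1..q-2. K * c r * xi (r + 1)) + K * xi q"
    unfolding card_upper_cols_of_type_ends[OF assms] K_def by simp
  then show ?thesis
    unfolding gamma_def c_def[symmetric] K_def[symmetric]
    by (simp add: algebra_simps sum_distrib_left)
qed

end

locale balanced_pir_construction = pir_construction +
  assumes xi_pos: "\<forall>r\<in>{1..q}. xi r > 0"
    and balance_top: "xi (q - 1) * ((p - t) choose ((q - 2) * t + 1)) = xi q"
    and balance_mid: "\<forall>r. 2 \<le> r \<and> r \<le> q - 2 \<longrightarrow>
      ((p - t) choose ((r - 1) * t + 1)) * xi r = ((p - t) choose (r * t)) * xi (r + 1)"
    and balance_1: "(p - t) * xi 1 = t * ((p - t) choose t) * xi 2"
begin

lemma balance_key_2: "xi 1 = ((p - (t + 1)) choose (t - 1)) * xi 2"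
proof -
  have "t * ((p - t) choose t) = (p - t) * ((p - t - 1) choose (t - 1))"
    using t_ge_2 by (simp add: times_binomial_minus1_eq)
  then have "(p - t) * xi 1 = (p - t) * (((p - (t + 1)) choose (t - 1)) * xi 2)"
    using balance_1 by (simp add: mult.assoc)
  then show ?thesis using t_lt_p by simp
qed

lemma balance_key_mid:
  assumes "2 \<le> r" "r \<le> q - 2"
  shows "((r * t) choose (t - 1)) * xi r = ((p - (r * t + 1)) choose (t - 1)) * xi (r + 1)"
proof -
  define a n where "a = (r - 1) * t + 1" and "n = p - t"
  have "r = Suc (r - 1)" using assms by simp
  then have "r * t = (r - 1) * t + t" by (metis mult_Suc add.commute)
  then have rt: "r * t = a + (t - 1)" unfolding a_def using t_ge_2 by simp
  have "(r + 1) * t \<le> (q - 1) * t" using assms by (intro mult_le_mono1) simp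
  then have "r * t \<le> n" unfolding n_def using p_gt by (simp add: algebra_simps)
  have "(n choose (r * t)) * ((r * t) choose a) = (n choose a) * ((n - a) choose (r * t - a))"
    using choose_mult[of a "r * t" n] \<open>r * t \<le> n\<close> rt by simp
  moreover have "(r * t) choose a = (r * t) choose (t - 1)"
    using binomial_symmetric[of a "r * t"] rt by simp
  moreover have "n - a = p - (r * t + 1)" "r * t - a = t - 1" unfolding n_def using rt t_ge_2 by auto
  ultimately have "(n choose (r * t)) * (((r * t) choose (t - 1)) * xi r) =
      ((p - (r * t + 1)) choose (t - 1)) * ((n choose a) * xi r)"
    by (metis mult.assoc mult.commute)
  also have "(n choose a) * xi r = (n choose (r * t)) * xi (r + 1)"
    using balance_mid assms unfolding n_def a_def by auto
  finally have "(n choose (r * t)) * (((r * t) choose (t - 1)) * xi r) =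
      (n choose (r * t)) * (((p - (r * t + 1)) choose (t - 1)) * xi (r + 1))"
    by (simp add: ac_simps)
  moreover have "n choose (r * t) > 0" using \<open>r * t \<le> n\<close> by simp
  ultimately show ?thesis by simp
qed

lemma card_key_fibres_eq:
  assumes i: "i \<in> {1..p}"
  shows "card {x \<in> lower_cols i. lower_key i x = (l, K)} = card {y \<in> upper_cols i. upper_key y = (l, K)}"
proof -
  consider "l = q" | "l \<noteq> q" "l \<le> 1 \<or> q - 1 < l" | "l = 2" | "3 \<le> l" "l \<le> q - 1"
    using q_ge_3 by linarith
  then show ?thesis
  proof cases
    case 1
    then show ?thesis
      using balance_top by (simp add: card_lower_fibre_top[OF i] card_upper_fibre_top mult.commute)
  next
    case 2
    then have no_lower: "{x \<in> lower_cols i. lower_key i x = (l, K)} = {}"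
      using lower_key_fst by fastforce
    show ?thesis unfolding no_lower card_upper_fibre[OF 2(1)] using 2(2) by auto
  next
    case 3
    then show ?thesis
      using q_ge_3 balance_key_2 by (auto simp: card_lower_fibre_2[OF i] card_upper_fibre)
  next
    case 4
    then have "(((l - 1) * t) choose (t - 1)) * xi (l - 1) = ((p - ((l - 1) * t + 1)) choose (t - 1)) * xi l"
      using balance_key_mid[of "l - 1"] by simp
    then show ?thesis
      using 4 by (simp add: card_lower_fibre_mid[OF i] card_upper_fibre)
  qed
qed

lemma ex_key_matching:
  assumes "i \<in> {1..p}"
  obtains f where "bij_betw f (lower_cols i) (upper_cols i)" "\<And>x. x \<in> lower_cols i \<Longrightarrow> upper_key (f x) = lower_key i x"
proof -
  have "card {x \<in> lower_cols i. lower_key i x = \<kappa>} = card {y \<in> upper_cols i. upper_key y = \<kappa>}" for \<kappa>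
    using card_key_fibres_eq[OF assms, of "fst \<kappa>" "snd \<kappa>"] by simp
  from ex_bij_betw_same_fibres[OF finite_cols_partition(2,3) this] that show ?thesis by blast
qed

lemma card_lower_cols:
  assumes "i \<in> {1..p}"
  shows "card (lower_cols i) = card (upper_cols i)"
proof -
  obtain f where "bij_betw f (lower_cols i) (upper_cols i)" using ex_key_matching[OF assms] by blast
  then show ?thesis by (rule bij_betw_same_card)
qed

lemma card_cols:
  assumes "i \<in> {1..p}"
  shows "card cols = card (direct_cols i) + 2 * card (upper_cols i)"
proof -
  note parts = cols_partition[of i] finite_cols_partition[of i]
  have "card cols = card (direct_cols i \<union> lower_cols i) + card (upper_cols i)"
    unfolding parts(1) using parts(2-) by (intro card_Un_disjoint) auto
  also have "card (direct_cols i \<union> lower_cols i) = card (direct_cols i) + card (lower_cols i)"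
    using parts(2-) by (intro card_Un_disjoint) auto
  finally show ?thesis using card_lower_cols[OF assms] by simp
qed

lemma ex_disjoint_recovery_sets:
  assumes i: "i \<in> {1..p}"
  shows "\<exists>\<S>. finite \<S> \<and> card \<S> = card (direct_cols i) + card (upper_cols i) \<and> disjoint \<S> \<and>
    (\<forall>S\<in>\<S>. S \<subseteq> cols \<and> (unitvec i :: 'a::field vec) \<in> lspan (\<Union>c\<in>S. set (code_col p q c)))"
proof -
  obtain f where f: "bij_betw f (lower_cols i) (upper_cols i)"
    "\<And>x. x \<in> lower_cols i \<Longrightarrow> upper_key (f x) = lower_key i x"
    using ex_key_matching[OF i] by blast
  have f_upper: "f x \<in> upper_cols i" if "x \<in> lower_cols i" for x
    using bij_betwE[OF f(1)] that by blast
  note parts = cols_partition[of i] finite_cols_partition[of i]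
  let ?singles = "(\<lambda>x. {x}) ` direct_cols i" and ?pairs = "(\<lambda>x. {x, f x}) ` lower_cols i"
  have inj_pairs: "inj_on (\<lambda>x. {x, f x}) (lower_cols i)"
    using f_upper parts by (auto simp: inj_on_def doubleton_eq_iff)
  have "card ?singles = card (direct_cols i)" by (simp add: card_image)
  moreover have "card ?pairs = card (upper_cols i)"
    using card_image[OF inj_pairs] card_lower_cols[OF i] by simp
  moreover have "?singles \<inter> ?pairs = {}" using f_upper parts by (auto simp: doubleton_eq_iff)
  ultimately have "card (?singles \<union> ?pairs) = card (direct_cols i) + card (upper_cols i)"
    using parts by (simp add: card_Un_disjoint)
  moreover have "disjoint (?singles \<union> ?pairs)"
    using f_upper parts bij_betw_imp_inj_on[OF f(1)] by (auto simp: disjoint_def dest: inj_onD)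
  moreover have "S \<subseteq> cols \<and> (unitvec i :: 'a vec) \<in> lspan (\<Union>c\<in>S. set (code_col p q c))"
    if S: "S \<in> ?singles \<union> ?pairs" for S
  proof (cases "S \<in> ?singles")
    case True
    then obtain r B C j where "S = {(r, B, C, j)}" "(r, B, C, j) \<in> cols" "i \<in> B"
      by (auto simp: direct_cols_def)
    then show ?thesis
      by (auto simp: set_code_col unitvec_eq_indicator intro!: lspan_base)
  next
    case False
    then obtain x where x: "S = {x, f x}" "x \<in> lower_cols i" using S by blast
    have "(unitvec i :: 'a vec) \<in> lspan (set (code_col p q x) \<union> set (code_col p q (f x)))"
      using unitvec_in_lspan_key_pair[OF i x(2) f_upper[OF x(2)] f(2)[OF x(2)]] .
    then show ?thesis using x f_upper[OF x(2)] parts by auto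
  qed
  moreover have "finite (?singles \<union> ?pairs)" using parts by simp
  ultimately show ?thesis by blast
qed

theorem code_is_k_PIR:
  "is_k_PIR p cols (code_col p q :: _ \<Rightarrow> 'a::field vec list) (card (direct_cols 1) + card (upper_cols 1))"
proof (rule is_k_PIR_I)
  fix i assume i: "i \<in> {1..p}"
  have one: "1 \<in> {1..p}" using t_lt_p by simp
  have "(t - 1) * card (direct_cols i) = (t - 1) * card (direct_cols 1)"
    using card_direct_cols[OF i] card_direct_cols[OF one] by simp
  then have "card (direct_cols i) = card (direct_cols 1)"
    using t_ge_2 by (subst (asm) mult_left_cancel) auto
  have "(p - t + 1) * card (upper_cols i) = (p - t + 1) * card (upper_cols 1)"
    using card_upper_cols[OF i] card_upper_cols[OF one] by simp
  then have "card (upper_cols i) = card (upper_cols 1)"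
    by (subst (asm) mult_left_cancel) auto
  moreover note \<open>card (direct_cols i) = card (direct_cols 1)\<close>
  ultimately show "\<exists>\<S>. finite \<S> \<and> card \<S> = card (direct_cols 1) + card (upper_cols 1) \<and> disjoint \<S> \<and>
      (\<forall>S\<in>\<S>. S \<subseteq> cols \<and> unitvec i \<in> lspan (\<Union>c\<in>S. set (code_col p q c :: 'a vec list)))"
    using ex_disjoint_recovery_sets[OF i] by simp
qed

lemma card_direct_upper_cross:
  assumes "i \<in> {1..p}"
  shows "card (direct_cols i) * gamma = card (upper_cols i) * beta"
proof -
  let ?D = "card (direct_cols i)" and ?U = "card (upper_cols i)"
  let ?K1 = "(p - 1) choose (t - 1)" and ?K2 = "(p - 1) choose (t - 2)"
  have "((t - 1) * (p - t + 1)) * (?D * gamma) = (p - t + 1) * gamma * ((t - 1) * ?D)"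
    by (simp only: ac_simps)
  also have "\<dots> = ((t - 1) * ?K1) * gamma * beta"
    using card_direct_cols[OF assms] binomial_ratio by (simp only: ac_simps)
  also have "\<dots> = (t - 1) * beta * ((p - t + 1) * ?U)"
    using card_upper_cols[OF assms] by (simp only: ac_simps)
  also have "\<dots> = ((t - 1) * (p - t + 1)) * (?U * beta)"
    by (simp only: ac_simps)
  finally show ?thesis using t_ge_2 by (subst (asm) mult_left_cancel) auto
qed

lemma pir_rate:
  "real (card (direct_cols 1) + card (upper_cols 1)) / real (card cols) =
    real (beta + gamma) / real (beta + 2 * gamma)"
proof -
  have one: "1 \<in> {1..p}" using t_lt_p by simp
  let ?D = "card (direct_cols 1)" and ?U = "card (upper_cols 1)"
  have "beta > 0" using xi_pos q_ge_3 unfolding beta_def by simp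
  moreover have "0 < ((p - 1) choose (t - 2)) * beta" using \<open>beta > 0\<close> t_lt_p by simp
  then have "?D > 0" using card_direct_cols[OF one] by (metis mult_0_right neq0_conv)
  moreover have "?D * gamma = ?U * beta" by (rule card_direct_upper_cross[OF one])
  ultimately show ?thesis
    unfolding card_cols[OF one] by (simp add: field_simps) (simp add: algebra_simps flip: of_nat_mult)
qed

end

lemma ceiling_of_non_integer_ratio:
  fixes s :: rat
  assumes "2 < s" "s \<notin> \<int>" "0 < t" "of_nat p = s * of_nat t" "q = nat \<lceil>s\<rceil>"
  shows "3 \<le> q" "(q - 1) * t < p" "p < q * t"
proof -
  have "s \<noteq> of_int \<lceil>s\<rceil>" using assms(2) by (metis Ints_of_int)
  then have "s < of_int \<lceil>s\<rceil>" using le_of_int_ceiling[of s] by (simp add: less_le)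
  moreover have "of_int \<lceil>s\<rceil> - 1 < s" using ceiling_correct[of s] by blast
  moreover have "of_int \<lceil>s\<rceil> = (of_nat q :: rat)" "2 < \<lceil>s\<rceil>"
    using assms(1,5) \<open>s < of_int \<lceil>s\<rceil>\<close> by (auto simp: less_ceiling_iff)
  ultimately have q: "of_nat q - 1 < s" "s < of_nat q" "3 \<le> q" by auto
  have "(of_nat ((q - 1) * t) :: rat) = (of_nat q - 1) * of_nat t" using q(3) by (simp add: of_nat_diff)
  also have "\<dots> < s * of_nat t" using q(1) assms(3) by (simp add: mult_strict_right_mono)
  finally show "(q - 1) * t < p" using assms(4) by (metis of_nat_less_iff)
  have "(of_nat p :: rat) < of_nat q * of_nat t" using assms(3,4) q(2) by (simp add: mult_strict_right_mono)
  then show "p < q * t" by (metis of_nat_less_iff of_nat_mult)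
  show "3 \<le> q" by (rule q(3))
qed

theorem theorem12:
  fixes s :: rat and t p q :: nat and xi :: "nat \<Rightarrow> nat"
  assumes "s > 2" and "s \<notin> \<int>" and "t > 1" and "of_nat p = s * of_nat t"
    and "q = nat \<lceil>s\<rceil>"
    and "\<forall>r\<in>{1..q}. xi r > 0"
    and "xi (q - 1) * ((p - t) choose ((q - 2) * t + 1)) = xi q"
    and "\<forall>r. 2 \<le> r \<and> r \<le> q - 2 \<longrightarrow>
           ((p - t) choose ((r - 1) * t + 1)) * xi r = ((p - t) choose (r * t)) * xi (r + 1)"
    and "(p - t) * xi 1 = t * ((p - t) choose t) * xi 2"
  shows "let I = code_index p t q xi;
             col = (code_col p q :: _ \<Rightarrow> ('a::{field,finite}) vec list);
             m = card I;
             \<beta> = xi 1 * (p - t + 1) + (\<Sum>r=2..q-1. (t - 1) * xi r * ((p - t + 1) choose ((r - 1) * t + 1)))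
                 + (t - 1) * xi q;
             \<gamma> = (p - t + 1) * ((\<Sum>r=1..q-2. xi (r + 1) * ((p - t) choose (r * t))) + xi q)
         in is_array_code t p I col \<and>
            (\<exists>k. is_k_PIR p I col k \<and> real k / real m = real (\<beta> + \<gamma>) / real (\<beta> + 2 * \<gamma>))"
proof -
  interpret balanced_pir_construction p t q xi
    using ceiling_of_non_integer_ratio[OF assms(1,2) _ assms(4,5)] assms(3,6-9)
    by unfold_locales auto
  show ?thesis
    unfolding Let_def beta_def[symmetric] gamma_def[symmetric]
    using code_is_array_code code_is_k_PIR pir_rate by blast
qed

end
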